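(* If $f_0,f_1,\dots,f_t\in F\langle X\rangle$ are $M_n$-locally linearly dependent while $f_1,\dots,f_t$ are $M_n$-locally linearly independent, then there exist central polynomials $c_0,c_1,\dots,c_t$ of $M_n$ such that $c_0$ is not a polynomial identity of $M_n$ and $\sum_{i=0}^tc_if_i$ is a polynomial identity of $M_n$.
   Context: $F$ is a field of characteristic $0$, $M_n=M_n(F)$, $F\langle X\rangle$ the free algebra on noncommuting $X=\{x_1,x_2,\dots\}$. Polynomials $f_1,\dots,f_t\in F\langle x_1,\dots,x_m\rangle$ are $M_n$-locally linearly dependent if $f_1(r_1,\dots,r_m),\dots,f_t(r_1,\dots,r_m)$ are linearly dependent over $F$ for all $r_1,\dots,r_m\in M_n$, and $M_n$-locally linearly independent otherwise. A central polynomial of $M_n$ is an element of $F\langle X\rangle$ all of whose evaluations in $M_n$ are scalar matrices; a polynomial identity is one all of whose evaluations are $0$. *)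

theory Defs
  imports "HOL-Analysis.Analysis" "HOL-Library.Poly_Mapping"
begin

text \<open>Noncommutative polynomials in the free algebra F<x_0, x_1, ...>:
  finitely supported functions from words (lists of variable indices) to F.\<close>
type_synonym 'a ncpoly = "nat list \<Rightarrow>\<^sub>0 'a"

definition ncmul :: "'a::comm_ring_1 ncpoly \<Rightarrow> 'a ncpoly \<Rightarrow> 'a ncpoly" where
  "ncmul p q = (\<Sum>u\<in>Poly_Mapping.keys p. \<Sum>v\<in>Poly_Mapping.keys q. Poly_Mapping.single (u @ v) (Poly_Mapping.lookup p u * Poly_Mapping.lookup q v))"

definition mat_smult :: "'a::times \<Rightarrow> 'a^'n^'m \<Rightarrow> 'a^'n^'m" (infixr "*\<^sub>M" 75) where
  "c *\<^sub>M M = (\<chi> i j. c * M $ i $ j)"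

definition word_eval :: "(nat \<Rightarrow> 'a::comm_ring_1 ^'n^'n) \<Rightarrow> nat list \<Rightarrow> 'a^'n^'n" where
  "word_eval r w = foldr (\<lambda>i M. r i ** M) w (mat 1)"

definition nc_eval :: "'a::comm_ring_1 ncpoly \<Rightarrow> (nat \<Rightarrow> 'a^'n^'n) \<Rightarrow> 'a^'n^'n" where
  "nc_eval p r = (\<Sum>w\<in>Poly_Mapping.keys p. Poly_Mapping.lookup p w *\<^sub>M word_eval r w)"

definition lin_dep_mats :: "(nat \<Rightarrow> 'a::field^'n^'n) \<Rightarrow> nat set \<Rightarrow> bool" where
  "lin_dep_mats A I \<longleftrightarrow> (\<exists>a. (\<exists>i\<in>I. a i \<noteq> 0) \<and> (\<Sum>i\<in>I. a i *\<^sub>M A i) = 0)"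

definition loc_lin_dep :: "'n::finite itself \<Rightarrow> (nat \<Rightarrow> 'a::field ncpoly) \<Rightarrow> nat set \<Rightarrow> bool" where
  "loc_lin_dep _ f I \<longleftrightarrow>
     (\<forall>r :: nat \<Rightarrow> 'a^'n^'n. lin_dep_mats (\<lambda>i. nc_eval (f i) r) I)"

definition central_poly :: "'n::finite itself \<Rightarrow> 'a::field ncpoly \<Rightarrow> bool" where
  "central_poly _ c \<longleftrightarrow> (\<forall>r :: nat \<Rightarrow> 'a^'n^'n. \<exists>s. nc_eval c r = mat s)"

definition poly_identity :: "'n::finite itself \<Rightarrow> 'a::field ncpoly \<Rightarrow> bool" where
  "poly_identity _ p \<longleftrightarrow> (\<forall>r :: nat \<Rightarrow> 'a^'n^'n. nc_eval p r = 0)"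

end

theory Submission
  imports Defs
begin

text \<open>Following Razmyslov: alternating the Capelli word \<open>X\<^sub>1 Y\<^sub>1 X\<^sub>2 Y\<^sub>2 \<dots> X\<^sub>N Y\<^sub>N\<close>, \<open>N = n\<^sup>2\<close>,
  in the \<open>X\<close>'s and inserting an extra variable \<open>W\<close> in all cyclic positions before the \<open>X\<close>'s gives a
  central polynomial whose value is \<open>\<Delta>(X) \<cdot> n \<cdot> tr(C(E; Y) W)\<close>, where \<open>\<Delta>(X)\<close> is the determinant of
  the \<open>N \<times> N\<close> matrix of entries of \<open>X\<^sub>1, \<dots>, X\<^sub>N\<close> and \<open>C(E; Y)\<close> the Capelli word at the matrix units.
  Substituting \<open>f\<^sub>1, \<dots>, f\<^sub>t\<close> (with \<open>f\<^sub>j\<close> replaced by \<open>f\<^sub>0\<close>) and fresh variables for the \<open>X\<close>'s gives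
  central polynomials \<open>c\<^sub>j\<close> whose values are Cramer's coefficients; hence \<open>\<Sum> c\<^sub>j f\<^sub>j\<close> vanishes
  wherever \<open>f\<^sub>0, \<dots>, f\<^sub>t\<close> are dependent. Where \<open>f\<^sub>1, \<dots>, f\<^sub>t\<close> are independent their values extend to
  a basis of \<open>M\<^sub>n\<close>, and the Capelli word at the matrix units and suitable \<open>Y\<close>'s is a diagonal matrix
  unit, so \<open>c\<^sub>0\<close> is not an identity.\<close>

subsection \<open>Matrices: scalar multiples, units and entries\<close>

lemma mat_smult_nth [simp]: "(c *\<^sub>M A) $ i $ j = c * A $ i $ j"
  by (simp add: mat_smult_def)

lemma mat_smult_zero [simp]:
  "0 *\<^sub>M (A::'a::comm_ring_1^'n^'m) = 0" "c *\<^sub>M 0 = (0::'a::comm_ring_1^'n^'m)"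
  by (simp_all add: vec_eq_iff)

lemma mat_smult_one [simp]: "1 *\<^sub>M A = (A::'a::comm_ring_1^'n^'m)"
  by (simp add: vec_eq_iff)

lemma mat_smult_assoc [simp]: "c *\<^sub>M (d *\<^sub>M A) = (c * d) *\<^sub>M (A::'a::comm_ring_1^'n^'m)"
  by (simp add: vec_eq_iff)

lemma mat_smult_minus [simp]:
  "(- c) *\<^sub>M A = - (c *\<^sub>M (A::'a::comm_ring_1^'n^'m))"
  "c *\<^sub>M (- A) = - (c *\<^sub>M (A::'a::comm_ring_1^'n^'m))"
  by (simp_all add: vec_eq_iff)

lemma mat_smult_add:
  "(c + d) *\<^sub>M A = c *\<^sub>M A + d *\<^sub>M (A::'a::comm_ring_1^'n^'m)"
  "c *\<^sub>M (A + B) = c *\<^sub>M A + c *\<^sub>M (B::'a::comm_ring_1^'n^'m)"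
  by (simp_all add: vec_eq_iff algebra_simps)

lemma mat_smult_sum_left: "(\<Sum>i\<in>S. f i) *\<^sub>M A = (\<Sum>i\<in>S. f i *\<^sub>M (A::'a::comm_ring_1^'n^'m))"
  by (induct S rule: infinite_finite_induct) (simp_all add: mat_smult_add)

lemma mat_smult_sum_right: "c *\<^sub>M (\<Sum>i\<in>S. A i) = (\<Sum>i\<in>S. c *\<^sub>M (A i::'a::comm_ring_1^'n^'m))"
  by (induct S rule: infinite_finite_induct) (simp_all add: mat_smult_add)

lemma mat_smult_mult [simp]:
  "(c *\<^sub>M A) ** B = c *\<^sub>M (A ** (B::'a::comm_ring_1^'k^'n))"
  "A ** (c *\<^sub>M B) = c *\<^sub>M (A ** (B::'a::comm_ring_1^'k^'n))"
  by (simp_all add: vec_eq_iff matrix_matrix_mult_def sum_distrib_left mult_ac)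

lemma mat_smult_mat: "c *\<^sub>M mat d = (mat (c * d)::'a::comm_ring_1^'n^'n)"
  by (simp add: vec_eq_iff mat_def)

lemma matrix_mul_mat_left: "mat c ** A = c *\<^sub>M (A :: 'a::comm_ring_1^'n::finite^'n)"
  by (simp add: vec_eq_iff matrix_matrix_mult_def mat_def if_distrib[where f="\<lambda>x. x * _"] cong: if_cong)

lemma mat_eq_zero_iff: "(mat c :: 'a::zero^'n^'n) = 0 \<longleftrightarrow> c = 0"
  by (auto simp: vec_eq_iff mat_def)

lemma matrix_add_rdistrib: "(B + C) ** A = B ** A + C ** (A::'a::comm_ring_1^'k^'n)"
  by (vector matrix_matrix_mult_def sum.distrib[symmetric] field_simps)

lemma matrix_mul_sum_left: "(\<Sum>i\<in>S. A i) ** (B::'a::comm_ring_1^'k^'n) = (\<Sum>i\<in>S. A i ** B)"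
  by (induct S rule: infinite_finite_induct) (simp_all add: matrix_add_rdistrib)

lemma matrix_mul_sum_right: "(B::'a::comm_ring_1^'k^'n) ** (\<Sum>i\<in>S. A i) = (\<Sum>i\<in>S. B ** A i)"
  by (induct S rule: infinite_finite_induct) (simp_all add: matrix_add_ldistrib)

lemma trace_sum: "trace (\<Sum>i\<in>S. A i) = (\<Sum>i\<in>S. trace (A i :: 'a::comm_ring_1^'n::finite^'n))"
  by (induct S rule: infinite_finite_induct) (simp_all add: trace_add trace_0[simplified])

lemma trace_mat_smult: "trace (c *\<^sub>M A) = c * trace (A :: 'a::comm_ring_1^'n::finite^'n)"
  by (simp add: trace_def sum_distrib_left)

definition mprod :: "('a::comm_ring_1^'n^'n) list \<Rightarrow> 'a^'n^'n" where
  "mprod xs = foldr (**) xs (mat 1)"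

lemma mprod_Nil [simp]: "mprod [] = mat 1"
  and mprod_Cons [simp]: "mprod (x # xs) = x ** mprod xs"
  by (simp_all add: mprod_def)

lemma mprod_append: "mprod (xs @ ys) = mprod xs ** mprod ys"
  by (induct xs) (simp_all add: matrix_mul_assoc)

definition matrix_unit :: "'n \<times> 'n \<Rightarrow> 'a::comm_ring_1^'n^'n" where
  "matrix_unit k = (\<chi> a b. if a = fst k \<and> b = snd k then 1 else 0)"

definition mat_entries :: "'a^'n^'m \<Rightarrow> 'a^('m \<times> 'n)" where
  "mat_entries A = (\<chi> k. A $ fst k $ snd k)"

lemma mat_entries_inject: "mat_entries A = mat_entries B \<longleftrightarrow> A = B"
  by (auto simp: mat_entries_def vec_eq_iff)

lemma mat_entries_zero [simp]: "mat_entries 0 = 0"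
  by (simp add: mat_entries_def vec_eq_iff)

lemma mat_entries_lincomb:
  "mat_entries (\<Sum>i\<in>S. c i *\<^sub>M A i) = (\<Sum>i\<in>S. c i *s mat_entries (A i :: 'a::comm_ring_1^'n^'m))"
  by (induct S rule: infinite_finite_induct) (simp_all add: mat_entries_def vec_eq_iff)

lemma matrix_unit_expansion:
  "A = (\<Sum>k\<in>UNIV. mat_entries A $ k *\<^sub>M (matrix_unit k :: 'a::comm_ring_1^'n::finite^'n))"
proof -
  have "(\<Sum>k\<in>UNIV. A $ fst k $ snd k * (if i = fst k \<and> j = snd k then 1 else 0))
      = (\<Sum>k\<in>UNIV. if k = (i, j) then A $ i $ j else 0)" for i j
    by (rule sum.cong) auto
  then show ?thesis
    by (simp add: vec_eq_iff mat_entries_def matrix_unit_def)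
qed

lemma matrix_unit_mult:
  "(matrix_unit p :: 'a::comm_ring_1^'n::finite^'n) ** matrix_unit q =
     (if snd p = fst q then matrix_unit (fst p, snd q) else 0)"
proof -
  have "(\<Sum>l\<in>UNIV. (if a = fst p \<and> l = snd p then 1 else 0) * (if l = fst q \<and> b = snd q then 1 else 0))
      = (\<Sum>l\<in>UNIV. if l = snd p then (if a = fst p \<and> l = fst q \<and> b = snd q then 1 else 0) else (0::'a))"
    for a b :: 'n
    by (rule sum.cong) auto
  then show ?thesis
    by (auto simp: vec_eq_iff matrix_matrix_mult_def matrix_unit_def)
qed

lemma mat_entries_mult_matrix_unit_diag:
  "mat_entries (Z ** matrix_unit s) $ s = (Z $ fst s $ fst s :: 'a::comm_ring_1)"
  by (simp add: mat_entries_def matrix_matrix_mult_def matrix_unit_def if_distrib cong: if_cong)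

lemma trace_matrix_unit:
  "trace (matrix_unit (i, j) :: 'a::comm_ring_1^'n::finite^'n) = (if i = j then 1 else 0)"
  by (cases "i = j") (auto simp: trace_def matrix_unit_def intro!: sum.neutral)

lemma trace_matrix_unit_mult:
  "trace (matrix_unit (j, i) ** A) = (A $ i $ j :: 'a::comm_ring_1)"
proof -
  have "(\<Sum>l\<in>UNIV. (if a = j \<and> l = i then 1 else 0) * A $ l $ a) = (if a = j then A $ i $ a else 0)"
    for a
    by (cases "a = j") (simp_all add: if_distrib[where f="\<lambda>x. x * _"] cong: if_cong)
  then show ?thesis
    by (simp add: trace_def matrix_matrix_mult_def matrix_unit_def)
qed

lemma mat_eq_if_trace_pairing:
  fixes A :: "'a::comm_ring_1^'n::finite^'n"
  assumes "\<And>Z. trace (Z ** A) = trace Z * c"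
  shows "A = mat c"
  using assms[of "matrix_unit (_, _)"]
  by (auto simp: vec_eq_iff mat_def trace_matrix_unit_mult trace_matrix_unit)

subsection \<open>Evaluation of noncommutative polynomials\<close>

lemma word_eval_Nil [simp]: "word_eval r [] = mat 1"
  by (simp add: word_eval_def)

lemma word_eval_Cons [simp]: "word_eval r (i # w) = r i ** word_eval r w"
  by (simp add: word_eval_def)

lemma word_eval_append: "word_eval r (u @ v) = word_eval r u ** word_eval r v"
  by (induct u) (simp_all add: matrix_mul_assoc)

lemma word_eval_cong: "(\<And>i. i \<in> set w \<Longrightarrow> r i = r' i) \<Longrightarrow> word_eval r w = word_eval r' w"
  by (induct w) auto

definition nc_vars :: "'a::zero ncpoly \<Rightarrow> nat set" where
  "nc_vars p = (\<Union>w\<in>Poly_Mapping.keys p. set w)"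

lemma finite_nc_vars [simp]: "finite (nc_vars p)"
  by (simp add: nc_vars_def)

lemma nc_eval_cong_vars: "(\<And>i. i \<in> nc_vars p \<Longrightarrow> r i = r' i) \<Longrightarrow> nc_eval p r = nc_eval p r'"
  unfolding nc_eval_def nc_vars_def by (intro sum.cong refl arg_cong[where f="(*\<^sub>M) _"] word_eval_cong) auto

lemma nc_eval_superset:
  assumes "finite S" "Poly_Mapping.keys p \<subseteq> S"
  shows "nc_eval p r = (\<Sum>w\<in>S. Poly_Mapping.lookup p w *\<^sub>M word_eval r w)"
  unfolding nc_eval_def
  by (rule sum.mono_neutral_left) (use assms in \<open>auto simp: in_keys_iff\<close>)

lemma nc_eval_add: "nc_eval (p + q) r = nc_eval p r + nc_eval q r"
proof -
  let ?S = "Poly_Mapping.keys p \<union> Poly_Mapping.keys q"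
  have "finite ?S" "Poly_Mapping.keys (p + q) \<subseteq> ?S"
    by (simp_all add: Poly_Mapping.keys_add)
  then show ?thesis
    by (simp add: nc_eval_superset[of ?S] lookup_add mat_smult_add sum.distrib)
qed

lemma nc_eval_zero [simp]: "nc_eval 0 r = 0"
  by (simp add: nc_eval_def)

lemma nc_eval_uminus: "nc_eval (- p) r = - nc_eval p r"
  unfolding nc_eval_def by (simp add: keys_minus sum_negf)

lemma nc_eval_sum: "nc_eval (\<Sum>i\<in>S. p i) r = (\<Sum>i\<in>S. nc_eval (p i) r)"
  by (induct S rule: infinite_finite_induct) (simp_all add: nc_eval_add)

lemma nc_eval_single: "nc_eval (Poly_Mapping.single w c) r = c *\<^sub>M word_eval r w"
  by (cases "c = 0") (simp_all add: nc_eval_def)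

lemma nc_eval_ncmul: "nc_eval (ncmul p q) r = nc_eval p r ** nc_eval q r"
proof -
  have "nc_eval (ncmul p q) r = (\<Sum>u\<in>Poly_Mapping.keys p. \<Sum>v\<in>Poly_Mapping.keys q.
     (Poly_Mapping.lookup p u * Poly_Mapping.lookup q v) *\<^sub>M (word_eval r u ** word_eval r v))"
    by (simp add: ncmul_def nc_eval_sum nc_eval_single word_eval_append)
  also have "\<dots> = nc_eval p r ** nc_eval q r"
    by (simp add: nc_eval_def matrix_mul_sum_left matrix_mul_sum_right mat_smult_sum_right)
      (subst sum.swap, simp add: mult.commute)
  finally show ?thesis .
qed

definition nc_var :: "nat \<Rightarrow> 'a::comm_ring_1 ncpoly" where
  "nc_var i = Poly_Mapping.single [i] 1"

definition nc_const :: "'a::comm_ring_1 \<Rightarrow> 'a ncpoly" where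
  "nc_const c = Poly_Mapping.single [] c"

definition nc_prod :: "'a::comm_ring_1 ncpoly list \<Rightarrow> 'a ncpoly" where
  "nc_prod ps = foldr ncmul ps (nc_const 1)"

lemma nc_eval_var [simp]: "nc_eval (nc_var i) r = r i"
  by (simp add: nc_var_def nc_eval_single)

lemma nc_eval_const [simp]: "nc_eval (nc_const c) r = mat c"
  by (simp add: nc_const_def nc_eval_single mat_smult_mat)

lemma nc_eval_prod: "nc_eval (nc_prod ps) r = mprod (map (\<lambda>p. nc_eval p r) ps)"
  by (induct ps) (simp_all add: nc_prod_def nc_eval_ncmul)

subsection \<open>Alternating multilinear functions of matrix tuples\<close>

definition slot_multilinear :: "(('s \<Rightarrow> 'a::comm_ring_1^'n^'n) \<Rightarrow> 'a^'m^'m) \<Rightarrow> bool" where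
  "slot_multilinear G \<longleftrightarrow>
     (\<forall>M s u v c d. G (M(s := c *\<^sub>M u + d *\<^sub>M v)) = c *\<^sub>M G (M(s := u)) + d *\<^sub>M G (M(s := v)))"

definition alternation ::
  "(('s::finite \<Rightarrow> 'a::comm_ring_1^'n^'n) \<Rightarrow> 'a^'m^'m) \<Rightarrow> ('s \<Rightarrow> 'a^'n^'n) \<Rightarrow> 'a^'m^'m" where
  "alternation G M = (\<Sum>\<sigma>\<in>{\<sigma>. \<sigma> permutes UNIV}. of_int (sign \<sigma>) *\<^sub>M G (M \<circ> \<sigma>))"

definition slot_det :: "('n::finite \<times> 'n \<Rightarrow> 'a::comm_ring_1^'n^'n) \<Rightarrow> 'a" where
  "slot_det M = det (\<chi> s. mat_entries (M s))"

lemma slot_multilinearD: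
  "slot_multilinear G \<Longrightarrow>
     G (M(s := c *\<^sub>M u + d *\<^sub>M v)) = c *\<^sub>M G (M(s := u)) + d *\<^sub>M G (M(s := v))"
  unfolding slot_multilinear_def by blast

lemma slot_multilinear_lincomb:
  assumes G: "slot_multilinear G" and "finite K"
  shows "G (M(s := \<Sum>k\<in>K. c k *\<^sub>M u k)) = (\<Sum>k\<in>K. c k *\<^sub>M G (M(s := u k)))"
  using \<open>finite K\<close>
proof induct
  case empty
  show ?case
    using slot_multilinearD[OF G, of M s 0 0 0 0] by (simp only: sum.empty mat_smult_zero add_0)
next
  case (insert x K)
  then show ?case
    using slot_multilinearD[OF G, of M s "c x" "u x" 1 "\<Sum>k\<in>K. c k *\<^sub>M u k"]
    by (simp add: fun_upd_def)
qed

lemma slot_multilinear_sum: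
  "(\<And>k. k \<in> K \<Longrightarrow> slot_multilinear (G k)) \<Longrightarrow> slot_multilinear (\<lambda>M. \<Sum>k\<in>K. G k M)"
  by (simp add: slot_multilinear_def sum.distrib mat_smult_sum_right)

lemma fun_upd_comp_permutes:
  "\<sigma> permutes UNIV \<Longrightarrow> (M(s := x)) \<circ> \<sigma> = (M \<circ> \<sigma>)(inv \<sigma> s := x)"
  by (auto simp: fun_eq_iff permutes_inverses)

lemma slot_multilinear_alternation:
  assumes G: "slot_multilinear G"
  shows "slot_multilinear (alternation G)"
  unfolding slot_multilinear_def alternation_def
proof (intro allI)
  fix M s u v c d
  have "G ((M(s := c *\<^sub>M u + d *\<^sub>M v)) \<circ> \<sigma>) =
      c *\<^sub>M G ((M(s := u)) \<circ> \<sigma>) + d *\<^sub>M G ((M(s := v)) \<circ> \<sigma>)" if "\<sigma> permutes UNIV" for \<sigma>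
    using that by (simp add: fun_upd_comp_permutes slot_multilinearD[OF G])
  then show "(\<Sum>\<sigma>\<in>{\<sigma>. \<sigma> permutes UNIV}. of_int (sign \<sigma>) *\<^sub>M G (M(s := c *\<^sub>M u + d *\<^sub>M v) \<circ> \<sigma>)) =
      c *\<^sub>M (\<Sum>\<sigma>\<in>{\<sigma>. \<sigma> permutes UNIV}. of_int (sign \<sigma>) *\<^sub>M G (M(s := u) \<circ> \<sigma>)) +
      d *\<^sub>M (\<Sum>\<sigma>\<in>{\<sigma>. \<sigma> permutes UNIV}. of_int (sign \<sigma>) *\<^sub>M G (M(s := v) \<circ> \<sigma>))"
    by (simp add: mat_smult_sum_right mat_smult_add sum.distrib mult.commute)
qed

lemma alternation_permute:
  fixes G :: "('s::finite \<Rightarrow> 'a::comm_ring_1^'n^'n) \<Rightarrow> 'a^'m^'m"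
  assumes \<pi>: "\<pi> permutes UNIV"
  shows "alternation G (M \<circ> \<pi>) = of_int (sign \<pi>) *\<^sub>M alternation G M"
proof -
  have inv_\<pi>: "inv \<pi> permutes UNIV"
    using permutes_inv[OF \<pi>] .
  have "alternation G (M \<circ> \<pi>) =
      (\<Sum>\<sigma>\<in>{\<sigma>. \<sigma> permutes (UNIV :: 's set)}. of_int (sign (inv \<pi> \<circ> \<sigma>)) *\<^sub>M G (M \<circ> \<pi> \<circ> (inv \<pi> \<circ> \<sigma>)))"
    unfolding alternation_def by (rule setum_permutations_compose_left[OF inv_\<pi>])
  also have "\<dots> = (\<Sum>\<sigma>\<in>{\<sigma>. \<sigma> permutes UNIV}. of_int (sign \<pi>) *\<^sub>M (of_int (sign \<sigma>) *\<^sub>M G (M \<circ> \<sigma>)))"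
  proof (rule sum.cong[OF refl])
    fix \<sigma> :: "'s \<Rightarrow> 's"
    assume "\<sigma> \<in> {\<sigma>. \<sigma> permutes UNIV}"
    then have "permutation \<pi>" "permutation \<sigma>" "permutation (inv \<pi>)"
      using \<pi> inv_\<pi> by (auto simp: permutation_permutes)
    then have "sign (inv \<pi> \<circ> \<sigma>) = sign \<pi> * sign \<sigma>"
      by (simp add: sign_compose sign_inverse)
    moreover have "M \<circ> \<pi> \<circ> (inv \<pi> \<circ> \<sigma>) = M \<circ> \<sigma>"
      by (simp add: o_assoc[symmetric] o_assoc permutes_inv_o(1)[OF \<pi>])
    ultimately show "of_int (sign (inv \<pi> \<circ> \<sigma>)) *\<^sub>M G (M \<circ> \<pi> \<circ> (inv \<pi> \<circ> \<sigma>)) =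
        of_int (sign \<pi>) *\<^sub>M (of_int (sign \<sigma>) *\<^sub>M G (M \<circ> \<sigma>))"
      by simp
  qed
  also have "\<dots> = of_int (sign \<pi>) *\<^sub>M alternation G M"
    unfolding alternation_def by (simp add: mat_smult_sum_right)
  finally show ?thesis .
qed

text \<open>Characteristic 0 enters here: an alternating map vanishes on repeated arguments because
  \<open>2 x = 0\<close> forces \<open>x = 0\<close>.\<close>

lemma alternation_repeated:
  fixes G :: "('s::finite \<Rightarrow> 'a::field_char_0^'n^'n) \<Rightarrow> 'a^'m^'m"
  assumes "s \<noteq> s'" "M s = M s'"
  shows "alternation G M = 0"
proof -
  let ?\<tau> = "Transposition.transpose s s'"
  have "M \<circ> ?\<tau> = M"
    using assms by (auto simp: fun_eq_iff Transposition.transpose_def)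
  then have "alternation G M = - alternation G M"
    using alternation_permute[of ?\<tau> G M] permutes_swap_id[of s UNIV s'] assms(1)
    by (simp add: sign_swap_id)
  then have "alternation G M + alternation G M = 0"
    by (simp add: eq_neg_iff_add_eq_0)
  then show ?thesis
    by (simp add: vec_eq_iff)
qed

lemma slot_multilinear_expansion_on:
  fixes \<phi> :: "('s \<Rightarrow> 'a::comm_ring_1^'n::finite^'n) \<Rightarrow> 'a^'m^'m"
  assumes \<phi>: "slot_multilinear \<phi>" and "finite T"
  shows "\<phi> (\<lambda>s. if s \<in> T then M s else C s) =
    (\<Sum>g\<in>T \<rightarrow>\<^sub>E UNIV. (\<Prod>s\<in>T. mat_entries (M s) $ g s) *\<^sub>M
       \<phi> (\<lambda>s. if s \<in> T then matrix_unit (g s) else C s))"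
  using \<open>finite T\<close>
proof (induct T arbitrary: C)
  case empty
  show ?case by simp
next
  case (insert z T C)
  let ?P = "\<lambda>g. \<Prod>s\<in>T. mat_entries (M s) $ g s"
  let ?E = "\<lambda>g s. if s \<in> T then matrix_unit (g s) else C s"
  have "\<phi> (\<lambda>s. if s \<in> insert z T then M s else C s) =
      (\<Sum>g\<in>T \<rightarrow>\<^sub>E UNIV. ?P g *\<^sub>M \<phi> ((?E g)(z := M z)))"
  proof -
    have "(\<lambda>s. if s \<in> insert z T then M s else C s) = (\<lambda>s. if s \<in> T then M s else (C(z := M z)) s)"
      and "(?E g)(z := M z) = (\<lambda>s. if s \<in> T then matrix_unit (g s) else (C(z := M z)) s)" for g
      using insert.hyps(2) by auto
    then show ?thesis
      using insert.hyps(3)[of "C(z := M z)"] by simp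
  qed
  also have "\<dots> = (\<Sum>g\<in>T \<rightarrow>\<^sub>E UNIV. \<Sum>k\<in>UNIV.
      (mat_entries (M z) $ k * ?P g) *\<^sub>M \<phi> ((?E g)(z := matrix_unit k)))"
    by (subst (1) matrix_unit_expansion[of "M z"])
      (simp add: slot_multilinear_lincomb[OF \<phi>] mat_smult_sum_right mult.commute)
  also have "\<dots> = (\<Sum>(k, g)\<in>UNIV \<times> (T \<rightarrow>\<^sub>E UNIV).
      (mat_entries (M z) $ k * ?P g) *\<^sub>M \<phi> ((?E g)(z := matrix_unit k)))"
    by (subst sum.swap) (simp add: sum.cartesian_product)
  also have "\<dots> = (\<Sum>g\<in>insert z T \<rightarrow>\<^sub>E UNIV. (\<Prod>s\<in>insert z T. mat_entries (M s) $ g s) *\<^sub>M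
      \<phi> (\<lambda>s. if s \<in> insert z T then matrix_unit (g s) else C s))"
  proof -
    have "(\<Prod>s\<in>insert z T. mat_entries (M s) $ (g(z := k)) s) = mat_entries (M z) $ k * ?P g"
      and "(\<lambda>s. if s \<in> insert z T then matrix_unit ((g(z := k)) s) else C s) = (?E g)(z := matrix_unit k)"
      for g k
      using insert.hyps by (auto intro!: arg_cong2[where f="(*)"] prod.cong)
    then show ?thesis
      using insert.hyps
      by (intro sum.reindex_bij_witness[of _ "\<lambda>g. (g z, g(z := undefined))" "\<lambda>(k, g). g(z := k)"])
        (auto simp: PiE_def extensional_def)
  qed
  finally show ?case .
qed

lemma slot_multilinear_expansion:
  fixes \<phi> :: "('s::finite \<Rightarrow> 'a::comm_ring_1^'n::finite^'n) \<Rightarrow> 'a^'m^'m"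
  assumes "slot_multilinear \<phi>"
  shows "\<phi> M = (\<Sum>g\<in>UNIV. (\<Prod>s\<in>UNIV. mat_entries (M s) $ g s) *\<^sub>M \<phi> (matrix_unit \<circ> g))"
  using slot_multilinear_expansion_on[OF assms, of UNIV M M] by (simp add: o_def)

lemma alternation_eq_slot_det:
  fixes G :: "('n::finite \<times> 'n \<Rightarrow> 'a::field_char_0^'n^'n) \<Rightarrow> 'a^'m^'m"
  assumes G: "slot_multilinear G"
  shows "alternation G M = slot_det M *\<^sub>M alternation G matrix_unit"
proof -
  have "alternation G M =
      (\<Sum>g\<in>UNIV. (\<Prod>s\<in>UNIV. mat_entries (M s) $ g s) *\<^sub>M alternation G (matrix_unit \<circ> g))"
    by (rule slot_multilinear_expansion[OF slot_multilinear_alternation[OF G]])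
  also have "\<dots> = (\<Sum>g\<in>{g. g permutes UNIV}.
      (\<Prod>s\<in>UNIV. mat_entries (M s) $ g s) *\<^sub>M alternation G (matrix_unit \<circ> g))"
  proof (rule sum.mono_neutral_right)
    show "\<forall>g\<in>UNIV - {g. g permutes UNIV}.
        (\<Prod>s\<in>UNIV. mat_entries (M s) $ g s) *\<^sub>M alternation G (matrix_unit \<circ> g) = 0"
    proof
      fix g :: "'n \<times> 'n \<Rightarrow> 'n \<times> 'n"
      assume "g \<in> UNIV - {g. g permutes UNIV}"
      then have "\<not> inj g"
        using finite_UNIV_inj_surj[of g] bij_imp_permutes[of g UNIV] by (auto simp: bij_def)
      then obtain s s' where "s \<noteq> s'" "g s = g s'"
        by (auto simp: inj_def)
      then show "(\<Prod>s\<in>UNIV. mat_entries (M s) $ g s) *\<^sub>M alternation G (matrix_unit \<circ> g) = 0"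
        using alternation_repeated[where G=G and M="matrix_unit \<circ> g"] by simp
    qed
  qed auto
  also have "\<dots> = (\<Sum>g\<in>{g. g permutes UNIV}.
      (of_int (sign g) * (\<Prod>s\<in>UNIV. mat_entries (M s) $ g s)) *\<^sub>M alternation G matrix_unit)"
    by (rule sum.cong) (auto simp: alternation_permute mult.commute)
  also have "\<dots> = slot_det M *\<^sub>M alternation G matrix_unit"
    by (simp add: slot_det_def det_def mat_smult_sum_left)
  finally show ?thesis .
qed

text \<open>The identity behind Razmyslov's central polynomials: by multilinearity it says that multiplying
  each argument of an alternating function in turn by \<open>Z\<close> and summing multiplies its value by
  \<open>n \<cdot> tr Z\<close>.\<close>

lemma alternation_trace_identity:
  fixes G :: "('n::finite \<times> 'n \<Rightarrow> 'a::field_char_0^'n^'n) \<Rightarrow> 'a^'m^'m"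
  assumes G: "slot_multilinear G"
  shows "(\<Sum>s\<in>UNIV. alternation G (matrix_unit(s := Z ** matrix_unit s))) =
    (of_nat CARD('n) * trace Z) *\<^sub>M alternation G matrix_unit"
proof -
  have single: "alternation G (matrix_unit(s := Z ** matrix_unit s)) =
      Z $ fst s $ fst s *\<^sub>M alternation G matrix_unit" for s
  proof -
    have "alternation G (matrix_unit(s := Z ** matrix_unit s)) =
        (\<Sum>k\<in>UNIV. mat_entries (Z ** matrix_unit s) $ k *\<^sub>M alternation G (matrix_unit(s := matrix_unit k)))"
      by (subst (1) matrix_unit_expansion)
        (rule slot_multilinear_lincomb[OF slot_multilinear_alternation[OF G]], simp)
    also have "\<dots> = (\<Sum>k\<in>UNIV. if k = s then mat_entries (Z ** matrix_unit s) $ s *\<^sub>M alternation G matrix_unit else 0)"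
      using alternation_repeated[where G=G and M="matrix_unit(s := matrix_unit _)" and s=s]
      by (intro sum.cong refl) auto
    finally show ?thesis
      by (simp add: mat_entries_mult_matrix_unit_diag)
  qed
  have "(\<Sum>s\<in>(UNIV::('n \<times> 'n) set). Z $ fst s $ fst s) = (\<Sum>(i, j)\<in>UNIV \<times> (UNIV::'n set). Z $ i $ i)"
    by (simp add: case_prod_unfold)
  also have "\<dots> = (\<Sum>i\<in>UNIV. \<Sum>j\<in>(UNIV::'n set). Z $ i $ i)"
    by (rule sum.cartesian_product[symmetric])
  also have "\<dots> = of_nat CARD('n) * trace Z"
    by (simp add: trace_def sum_distrib_left mult.commute)
  finally show ?thesis
    by (simp add: single mat_smult_sum_left[symmetric])
qed

subsection \<open>Capelli and Razmyslov words\<close>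

text \<open>An arbitrary enumeration of the \<open>n\<^sup>2\<close> index pairs; it fixes the order of the \<open>X\<close>'s in the
  Capelli word.\<close>

definition slot :: "nat \<Rightarrow> 'n::finite \<times> 'n" where
  "slot = (SOME h. bij_betw h {..<CARD('n \<times> 'n)} UNIV)"

definition slot_index :: "'n::finite \<times> 'n \<Rightarrow> nat" where
  "slot_index = the_inv_into {..<CARD('n \<times> 'n)} slot"

lemma bij_betw_slot: "bij_betw (slot :: nat \<Rightarrow> 'n::finite \<times> 'n) {..<CARD('n \<times> 'n)} UNIV"
proof -
  have "\<exists>h. bij_betw h {..<CARD('n \<times> 'n)} (UNIV :: ('n \<times> 'n) set)"
    using ex_bij_betw_nat_finite[of "UNIV :: ('n \<times> 'n) set"] by (simp add: lessThan_atLeast0)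
  then show ?thesis
    unfolding slot_def by (rule someI_ex)
qed

lemma slot_index_less: "slot_index (s :: 'n::finite \<times> 'n) < CARD('n \<times> 'n)"
  using bij_betw_slot[where 'n='n] the_inv_into_into[of slot "{..<CARD('n \<times> 'n)}" s]
  by (auto simp: slot_index_def bij_betw_def)

lemma slot_index_less_square [simp]: "slot_index (s :: 'n::finite \<times> 'n) < CARD('n) * CARD('n)"
  using slot_index_less[of s] by simp

lemma slot_slot_index [simp]: "slot (slot_index (s :: 'n::finite \<times> 'n)) = s"
  using bij_betw_slot[where 'n='n] by (simp add: slot_index_def bij_betw_def f_the_inv_into_f)

lemma slot_index_slot [simp]: "m < CARD('n::finite \<times> 'n) \<Longrightarrow> slot_index (slot m :: 'n \<times> 'n) = m"
  using bij_betw_slot[where 'n='n] by (simp add: slot_index_def bij_betw_def the_inv_into_f_f)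

lemma slot_index_inject [simp]: "slot_index s = slot_index s' \<longleftrightarrow> s = (s' :: 'n::finite \<times> 'n)"
  by (metis slot_slot_index)

definition interleave :: "(nat \<Rightarrow> 'b) \<Rightarrow> ('n::finite \<times> 'n \<Rightarrow> 'b) \<Rightarrow> 'b list" where
  "interleave Y M =
     map (\<lambda>i. if even i then M (slot (i div 2)) else Y (i div 2)) [0..<2 * CARD('n \<times> 'n)]"

lemma length_interleave [simp]:
  "length (interleave Y (M :: 'n::finite \<times> 'n \<Rightarrow> 'b)) = 2 * CARD('n \<times> 'n)"
  by (simp add: interleave_def)

lemma nth_interleave:
  "i < 2 * CARD('n \<times> 'n) \<Longrightarrow>
     interleave Y (M :: 'n::finite \<times> 'n \<Rightarrow> 'b) ! i = (if even i then M (slot (i div 2)) else Y (i div 2))"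
  by (simp add: interleave_def)

lemma map_interleave: "map f (interleave Y M) = interleave (f \<circ> Y) (f \<circ> M)"
  by (simp add: interleave_def)

lemma interleave_fun_upd:
  "interleave Y (M(s := u)) = (interleave Y (M :: 'n::finite \<times> 'n \<Rightarrow> 'b))[2 * slot_index s := u]"
proof (rule nth_equalityI)
  fix i
  assume "i < length (interleave Y (M(s := u)))"
  then have i: "i < 2 * CARD('n \<times> 'n)"
    by simp
  show "interleave Y (M(s := u)) ! i = (interleave Y M)[2 * slot_index s := u] ! i"
  proof (cases "i = 2 * slot_index s")
    case True
    then show ?thesis
      using i by (simp add: nth_interleave)
  next
    case False
    have "slot (i div 2) \<noteq> s" if "even i"
    proof
      assume "slot (i div 2) = s"
      then have "slot_index s = i div 2"
        using i by auto
      then show False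
        using that False by auto
    qed
    then show ?thesis
      using i False by (simp add: nth_interleave)
  qed
qed simp

lemma slot_multilinear_interleave:
  fixes F :: "('a::comm_ring_1^'n::finite^'n) list \<Rightarrow> 'a^'m^'m"
  assumes "\<And>xs i c d u v. i < length xs \<Longrightarrow>
    F (xs[i := c *\<^sub>M u + d *\<^sub>M v]) = c *\<^sub>M F (xs[i := u]) + d *\<^sub>M F (xs[i := v])"
  shows "slot_multilinear (\<lambda>M. F (interleave Y M))"
  unfolding slot_multilinear_def interleave_fun_upd
  by (intro allI assms) simp

lemma mprod_update_lincomb:
  "i < length xs \<Longrightarrow>
     mprod (xs[i := c *\<^sub>M u + d *\<^sub>M v]) = c *\<^sub>M mprod (xs[i := u]) + d *\<^sub>M mprod (xs[i := v])"
  by (induct xs arbitrary: i) (auto simp: matrix_add_rdistrib matrix_add_ldistrib split: nat.split)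

definition shifted_prod :: "'a::comm_ring_1^'n^'n \<Rightarrow> nat \<Rightarrow> ('a^'n^'n) list \<Rightarrow> 'a^'n^'n" where
  "shifted_prod W k xs = mprod (drop k xs) ** W ** mprod (take k xs)"

lemma shifted_prod_update_lincomb:
  assumes "i < length xs"
  shows "shifted_prod W k (xs[i := c *\<^sub>M u + d *\<^sub>M v]) =
    c *\<^sub>M shifted_prod W k (xs[i := u]) + d *\<^sub>M shifted_prod W k (xs[i := v])"
proof (cases "i < k")
  case True
  then show ?thesis
    using assms by (simp add: shifted_prod_def take_update_swap mprod_update_lincomb matrix_add_ldistrib)
next
  case False
  then show ?thesis
    using assms by (simp add: shifted_prod_def drop_update_swap mprod_update_lincomb matrix_add_rdistrib)
qed

lemma trace_shifted_prod:
  assumes "k < length xs"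
  shows "trace (Z ** shifted_prod W k xs) = trace (mprod (xs[k := Z ** xs ! k]) ** W)"
proof -
  let ?D = "mprod (drop k xs)" and ?T = "mprod (take k xs)"
  have "trace (Z ** shifted_prod W k xs) = trace ((Z ** ?D ** W) ** ?T)"
    by (simp add: shifted_prod_def matrix_mul_assoc)
  also have "\<dots> = trace (?T ** (Z ** ?D ** W))"
    by (rule trace_mul_sym)
  also have "\<dots> = trace ((?T ** Z ** ?D) ** W)"
    by (simp add: matrix_mul_assoc)
  also have "?T ** Z ** ?D = mprod (xs[k := Z ** xs ! k])"
    using assms
    by (simp add: upd_conv_take_nth_drop mprod_append Cons_nth_drop_Suc[symmetric] matrix_mul_assoc)
  finally show ?thesis .
qed

definition capelli_word :: "(nat \<Rightarrow> 'a::comm_ring_1^'n^'n) \<Rightarrow> ('n::finite \<times> 'n \<Rightarrow> 'a^'n^'n) \<Rightarrow> 'a^'n^'n" where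
  "capelli_word Y M = mprod (interleave Y M)"

text \<open>The sum of the cyclic rotations of the Capelli word that start with an \<open>X\<close>, each followed by
  \<open>W\<close>; alternating it over the \<open>X\<close>'s gives Razmyslov's central polynomial.\<close>

definition razmyslov_word ::
  "(nat \<Rightarrow> 'a::comm_ring_1^'n^'n) \<Rightarrow> 'a^'n^'n \<Rightarrow> ('n::finite \<times> 'n \<Rightarrow> 'a^'n^'n) \<Rightarrow> 'a^'n^'n" where
  "razmyslov_word Y W M = (\<Sum>k<CARD('n \<times> 'n). shifted_prod W (2 * k) (interleave Y M))"

lemma slot_multilinear_capelli_word: "slot_multilinear (capelli_word Y)"
  unfolding capelli_word_def by (rule slot_multilinear_interleave[OF mprod_update_lincomb])

lemma slot_multilinear_razmyslov_word: "slot_multilinear (razmyslov_word Y W)"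
  unfolding razmyslov_word_def
  by (intro slot_multilinear_sum slot_multilinear_interleave shifted_prod_update_lincomb)

lemma trace_razmyslov_word:
  fixes M :: "'n::finite \<times> 'n \<Rightarrow> 'a::comm_ring_1^'n^'n"
  shows "trace (Z ** razmyslov_word Y W M) =
    (\<Sum>k<CARD('n \<times> 'n). trace (capelli_word Y (M(slot k := Z ** M (slot k))) ** W))"
  unfolding razmyslov_word_def matrix_mul_sum_right trace_sum
proof (intro sum.cong refl)
  fix k
  assume "k \<in> {..<CARD('n \<times> 'n)}"
  then show "trace (Z ** shifted_prod W (2 * k) (interleave Y M)) =
      trace (capelli_word Y (M(slot k := Z ** M (slot k))) ** W)"
    by (simp add: trace_shifted_prod capelli_word_def interleave_fun_upd nth_interleave)
qed

lemma trace_alternation: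
  "trace (Z ** alternation G M) =
    (\<Sum>\<sigma>\<in>{\<sigma>. \<sigma> permutes UNIV}. of_int (sign \<sigma>) * trace (Z ** G (M \<circ> \<sigma>)))"
  by (simp add: alternation_def matrix_mul_sum_right trace_sum trace_mat_smult)

lemma alternation_razmyslov_word_matrix_units:
  fixes Y :: "nat \<Rightarrow> 'a::field_char_0^'n::finite^'n"
  shows "alternation (razmyslov_word Y W) matrix_unit =
    mat (of_nat CARD('n) * trace (alternation (capelli_word Y) matrix_unit ** W))"
proof (rule mat_eq_if_trace_pairing)
  fix Z :: "'a^'n^'n"
  let ?F = "\<lambda>\<sigma> s. trace (capelli_word Y ((matrix_unit(s := Z ** matrix_unit s)) \<circ> \<sigma>) ** W)"
  have "trace (Z ** razmyslov_word Y W (matrix_unit \<circ> \<sigma>)) = (\<Sum>s\<in>UNIV. ?F \<sigma> s)"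
    if \<sigma>: "\<sigma> permutes UNIV" for \<sigma>
  proof -
    have "(matrix_unit \<circ> \<sigma>)(slot k := Z ** (matrix_unit \<circ> \<sigma>) (slot k)) =
        (matrix_unit(\<sigma> (slot k) := Z ** matrix_unit (\<sigma> (slot k)))) \<circ> \<sigma>" for k
      using permutes_inj[OF \<sigma>] by (auto simp: fun_eq_iff inj_eq)
    then have "trace (Z ** razmyslov_word Y W (matrix_unit \<circ> \<sigma>)) =
        (\<Sum>k<CARD('n \<times> 'n). ?F \<sigma> ((\<sigma> \<circ> slot) k))"
      by (simp add: trace_razmyslov_word)
    also have "\<dots> = (\<Sum>s\<in>UNIV. ?F \<sigma> s)"
      by (rule sum.reindex_bij_betw[OF bij_betw_trans[OF bij_betw_slot permutes_imp_bij[OF \<sigma>]]])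
    finally show ?thesis .
  qed
  then have "trace (Z ** alternation (razmyslov_word Y W) matrix_unit) =
      (\<Sum>\<sigma>\<in>{\<sigma>. \<sigma> permutes UNIV}. of_int (sign \<sigma>) * (\<Sum>s\<in>UNIV. ?F \<sigma> s))"
    by (simp add: trace_alternation)
  also have "\<dots> = (\<Sum>s\<in>UNIV. trace (alternation (capelli_word Y) (matrix_unit(s := Z ** matrix_unit s)) ** W))"
    by (simp add: alternation_def matrix_mul_sum_left trace_sum trace_mat_smult sum_distrib_left)
      (rule sum.swap)
  also have "\<dots> = trace ((\<Sum>s\<in>UNIV. alternation (capelli_word Y) (matrix_unit(s := Z ** matrix_unit s))) ** W)"
    by (simp add: matrix_mul_sum_left trace_sum)
  also have "\<dots> = trace Z * (of_nat CARD('n) * trace (alternation (capelli_word Y) matrix_unit ** W))"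
    by (simp add: alternation_trace_identity[OF slot_multilinear_capelli_word] trace_mat_smult)
  finally show "trace (Z ** alternation (razmyslov_word Y W) matrix_unit) =
      trace Z * (of_nat CARD('n) * trace (alternation (capelli_word Y) matrix_unit ** W))" .
qed

lemma alternation_razmyslov_word:
  fixes Y :: "nat \<Rightarrow> 'a::field_char_0^'n::finite^'n"
  shows "alternation (razmyslov_word Y W) M =
    mat (slot_det M * (of_nat CARD('n) * trace (alternation (capelli_word Y) matrix_unit ** W)))"
  unfolding alternation_eq_slot_det[OF slot_multilinear_razmyslov_word, of Y W M]
  by (simp add: alternation_razmyslov_word_matrix_units mat_smult_mat)

definition linked :: "('n \<times> 'n) list \<Rightarrow> bool" where
  "linked ps \<longleftrightarrow> (\<forall>i. Suc i < length ps \<longrightarrow> snd (ps ! i) = fst (ps ! Suc i))"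

lemma linked_Cons_Cons: "linked (p # q # qs) \<longleftrightarrow> snd p = fst q \<and> linked (q # qs)"
  by (auto simp: linked_def less_Suc_eq_0_disj)

lemma mprod_matrix_units:
  "ps \<noteq> [] \<Longrightarrow> mprod (map matrix_unit ps) =
     (if linked ps then (matrix_unit (fst (hd ps), snd (last ps)) :: 'a::comm_ring_1^'n::finite^'n) else 0)"
proof (induct ps)
  case (Cons p ps)
  show ?case
  proof (cases ps)
    case (Cons q qs)
    then show ?thesis
      using Cons.hyps by (auto simp: linked_Cons_Cons matrix_unit_mult)
  qed (simp add: linked_def)
qed simp

text \<open>The connector at odd position \<open>2m + 1\<close> of the Capelli word joins the column of slot \<open>m\<close> to the
  row of slot \<open>m + 1\<close> (cyclically), so only the identity permutation yields a nonzero product.\<close>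

definition connector :: "nat \<Rightarrow> 'n::finite \<times> 'n" where
  "connector m = (snd (slot m), fst (slot (Suc m mod CARD('n \<times> 'n))))"

lemma linked_interleave_connector_imp_id:
  fixes \<sigma> :: "'n::finite \<times> 'n \<Rightarrow> 'n \<times> 'n"
  assumes linked: "linked (interleave connector \<sigma>)" and \<sigma>: "\<sigma> permutes UNIV"
  shows "\<sigma> = id"
proof -
  let ?N = "CARD('n \<times> 'n)"
  have link: "snd (interleave connector \<sigma> ! i) = fst (interleave connector \<sigma> ! Suc i)"
    if "Suc i < 2 * ?N" for i
    using linked that unfolding linked_def by simp
  have snd_fixed: "snd (\<sigma> (slot m)) = snd (slot m)" if "m < ?N" for m
    using link[of "2 * m"] that by (simp add: nth_interleave connector_def)
  have fst_fixed: "fst (\<sigma> (slot (Suc m))) = fst (slot (Suc m))" if "Suc m < ?N" for m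
    using link[of "Suc (2 * m)"] that by (simp add: nth_interleave connector_def)
  have fixed: "\<sigma> (slot m) = slot m" if "0 < m" "m < ?N" for m
    using snd_fixed[OF that(2)] fst_fixed[of "m - 1"] that by (simp add: prod_eq_iff)
  have "\<sigma> (slot 0) = slot 0"
  proof (rule ccontr)
    assume ne: "\<sigma> (slot 0) \<noteq> slot 0"
    then have "slot_index (\<sigma> (slot 0)) \<noteq> 0"
      by (metis slot_slot_index)
    then have "\<sigma> (\<sigma> (slot 0)) = \<sigma> (slot 0)"
      using fixed[of "slot_index (\<sigma> (slot 0))"] slot_index_less by simp
    then show False
      using ne permutes_inj[OF \<sigma>] by (simp add: inj_eq)
  qed
  moreover have "\<sigma> s = s" if "slot_index s \<noteq> 0" for s
    using fixed[of "slot_index s"] slot_index_less[of s] that by simp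
  ultimately have "\<sigma> s = s" for s
    by (metis slot_slot_index)
  then show "\<sigma> = id"
    by auto
qed

lemma linked_interleave_connector_id: "linked (interleave connector (id :: 'n::finite \<times> 'n \<Rightarrow> _))"
  unfolding linked_def
proof (intro allI impI)
  fix i
  assume "Suc i < length (interleave connector (id :: 'n \<times> 'n \<Rightarrow> _))"
  then have i: "Suc i < 2 * CARD('n \<times> 'n)"
    by simp
  show "snd (interleave connector id ! i) = fst (interleave connector (id :: 'n \<times> 'n \<Rightarrow> _) ! Suc i)"
  proof (cases "even i")
    case False
    then obtain m where "i = Suc (2 * m)"
      by (metis oddE add.commute plus_1_eq_Suc)
    then show ?thesis
      using i by (simp add: nth_interleave connector_def)
  qed (use i in \<open>simp add: nth_interleave connector_def\<close>)
qed

lemma alternation_capelli_word_matrix_units: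
  "alternation (capelli_word (matrix_unit \<circ> connector)) matrix_unit =
    (matrix_unit (fst (slot 0), fst (slot 0)) :: 'a::comm_ring_1^'n::finite^'n)"
proof -
  let ?N = "CARD('n \<times> 'n)"
  let ?p = "interleave connector (id :: 'n \<times> 'n \<Rightarrow> _)"
  let ?P = "{\<sigma> :: 'n \<times> 'n \<Rightarrow> 'n \<times> 'n. \<sigma> permutes UNIV}"
  have ne: "interleave connector \<sigma> \<noteq> []" for \<sigma> :: "'n \<times> 'n \<Rightarrow> 'n \<times> 'n"
    by (simp add: interleave_def)
  have "alternation (capelli_word (matrix_unit \<circ> connector)) (matrix_unit :: _ \<Rightarrow> 'a^'n^'n) =
      (\<Sum>\<sigma>\<in>?P. if \<sigma> = id then matrix_unit (fst (hd ?p), snd (last ?p)) else 0)"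
    unfolding alternation_def capelli_word_def map_interleave[symmetric]
  proof (rule sum.cong[OF refl])
    fix \<sigma> :: "'n \<times> 'n \<Rightarrow> 'n \<times> 'n"
    assume "\<sigma> \<in> ?P"
    then show "of_int (sign \<sigma>) *\<^sub>M mprod (map matrix_unit (interleave connector \<sigma>)) =
        (if \<sigma> = id then matrix_unit (fst (hd ?p), snd (last ?p)) else (0 :: 'a^'n^'n))"
      by (auto simp: mprod_matrix_units[OF ne] linked_interleave_connector_id
        dest: linked_interleave_connector_imp_id)
  qed
  also have "\<dots> = matrix_unit (fst (hd ?p), snd (last ?p))"
    by (simp add: permutes_id)
  also have "hd ?p = slot 0"
    by (simp add: interleave_def hd_map upt_conv_Cons)
  also have "last ?p = ?p ! (2 * ?N - 1)"
    by (simp add: last_conv_nth ne)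
  also have "\<dots> = connector (?N - 1)"
  proof -
    have "odd (2 * ?N - 1)" "(2 * ?N - 1) div 2 = ?N - 1"
      by simp_all
    then show ?thesis
      by (simp add: nth_interleave)
  qed
  also have "connector (?N - 1) = (snd (slot (?N - 1)), fst (slot 0 :: 'n \<times> 'n))"
    by (simp add: connector_def)
  finally show ?thesis
    by (simp only: snd_conv)
qed

subsection \<open>Cramer's rule for the slot determinant\<close>

lemma slot_det_fun_upd:
  "slot_det (M(s := x)) = det (\<chi> i. if i = s then mat_entries x else mat_entries (M i))"
  by (simp add: slot_det_def if_distrib[where f=mat_entries] cong: if_cong)

lemma slot_det_fun_upd_lincomb:
  fixes M :: "'n::finite \<times> 'n \<Rightarrow> 'a::comm_ring_1^'n^'n"
  assumes "finite K"
  shows "slot_det (M(s := \<Sum>k\<in>K. c k *\<^sub>M u k)) = (\<Sum>k\<in>K. c k * slot_det (M(s := u k)))"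
proof -
  have "slot_det (M(s := \<Sum>k\<in>K. c k *\<^sub>M u k)) =
      det (\<chi> i. if i = s then \<Sum>k\<in>K. c k *s mat_entries (u k) else mat_entries (M i))"
    by (simp only: slot_det_fun_upd mat_entries_lincomb)
  also have "\<dots> = (\<Sum>k\<in>K. det (\<chi> i. if i = s then c k *s mat_entries (u k) else mat_entries (M i)))"
    by (rule det_linear_row_sum[OF assms])
  also have "\<dots> = (\<Sum>k\<in>K. c k * slot_det (M(s := u k)))"
    by (simp add: slot_det_fun_upd det_row_mul)
  finally show ?thesis .
qed

lemma slot_det_repeated:
  assumes "s \<noteq> s'" "M s = M s'"
  shows "slot_det M = 0"
  unfolding slot_det_def by (rule det_identical_rows[OF assms(1)]) (simp add: row_def assms(2))

lemma slot_det_transpose: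
  assumes "s \<noteq> s'"
  shows "slot_det (M \<circ> Transposition.transpose s s') = - slot_det M"
  using det_permute_rows[of "Transposition.transpose s s'" "\<chi> s. mat_entries (M s)"]
    permutes_swap_id[of s UNIV s'] assms
  by (simp add: slot_det_def sign_swap_id)

lemma slot_det_fun_upd_span:
  assumes "finite I" and B: "\<And>i. i \<in> I \<Longrightarrow> B (p i) = w i" and s: "s \<notin> p ` I"
  shows "slot_det (B(s := \<Sum>i\<in>I. b i *\<^sub>M w i)) = 0"
proof -
  have "slot_det (B(s := w i)) = 0" if "i \<in> I" for i
    using slot_det_repeated[of s "p i" "B(s := w i)"] B[OF that] s that by auto
  then show ?thesis
    by (simp add: slot_det_fun_upd_lincomb[OF \<open>finite I\<close>])
qed

lemma slot_det_fun_upd_span_self: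
  assumes "finite I" "inj_on p I" and B: "\<And>i. i \<in> I \<Longrightarrow> B (p i) = w i" and "j \<in> I"
  shows "slot_det (B(p j := \<Sum>i\<in>I. b i *\<^sub>M w i)) = b j * slot_det B"
proof -
  have "slot_det (B(p j := w i)) = (if i = j then slot_det B else 0)" if "i \<in> I" for i
  proof (cases "i = j")
    case True
    then show ?thesis
      using B[OF \<open>j \<in> I\<close>] by (simp add: fun_upd_idem)
  next
    case False
    then have "p j \<noteq> p i"
      using assms(2) that \<open>j \<in> I\<close> by (auto dest: inj_onD)
    then show ?thesis
      using slot_det_repeated[of "p j" "p i" "B(p j := w i)"] B[OF that] False by simp
  qed
  then have "(\<Sum>i\<in>I. b i * slot_det (B(p j := w i))) = (\<Sum>i\<in>I. if i = j then b j * slot_det B else 0)"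
    by (intro sum.cong refl) simp
  then show ?thesis
    using assms by (simp add: slot_det_fun_upd_lincomb)
qed

lemma mat_lincomb_solve:
  fixes w :: "nat \<Rightarrow> 'a::field^'n^'m"
  assumes "c *\<^sub>M x + (\<Sum>i\<in>S. a i *\<^sub>M w i) = 0" "c \<noteq> 0"
  shows "x = (\<Sum>i\<in>S. (- a i / c) *\<^sub>M w i)"
proof -
  have "c *\<^sub>M x = - (\<Sum>i\<in>S. a i *\<^sub>M w i)"
    using assms(1) by (simp add: eq_neg_iff_add_eq_0)
  then have "(1 / c) *\<^sub>M (c *\<^sub>M x) = (1 / c) *\<^sub>M (- (\<Sum>i\<in>S. a i *\<^sub>M w i))"
    by simp
  then show ?thesis
    using assms(2) by (simp add: mat_smult_sum_right sum_negf[symmetric])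
qed

lemma slot_det_cramer_span:
  fixes t :: nat
  assumes "inj_on p {1..t}" and B: "\<And>i. i \<in> {1..t} \<Longrightarrow> B (p i) = w i"
    and w0: "w 0 = (\<Sum>i\<in>{1..t}. b i *\<^sub>M w i)"
  shows "slot_det B *\<^sub>M w 0 = (\<Sum>j\<in>{1..t}. slot_det (B(p j := w 0)) *\<^sub>M w j)"
proof -
  have "slot_det (B(p j := w 0)) = b j * slot_det B" if "j \<in> {1..t}" for j
    unfolding w0 by (rule slot_det_fun_upd_span_self) (use assms(1) B that in auto)
  then have "(\<Sum>j\<in>{1..t}. slot_det (B(p j := w 0)) *\<^sub>M w j) = (\<Sum>j\<in>{1..t}. slot_det B *\<^sub>M (b j *\<^sub>M w j))"
    by (intro sum.cong refl) (simp add: mult.commute)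
  then show ?thesis
    by (simp add: w0 mat_smult_sum_right)
qed

lemma slot_det_cramer_dependent:
  fixes t :: nat
  assumes p: "inj_on p {1..t}" and B: "\<And>i. i \<in> {1..t} \<Longrightarrow> B (p i) = w i"
    and m: "m \<in> {1..t}" and wm: "w m = (\<Sum>i\<in>{1..t} - {m}. b i *\<^sub>M w i)"
  shows "slot_det B *\<^sub>M w 0 = (\<Sum>j\<in>{1..t}. slot_det (B(p j := w 0)) *\<^sub>M w j)"
proof -
  let ?I = "{1..t} - {m}"
  let ?Q = "slot_det (B(p m := w 0))"
  have pm: "p i \<noteq> p m" if "i \<in> ?I" for i
    using inj_onD[OF p, of i m] m that by auto
  have "slot_det B = slot_det (B(p m := \<Sum>i\<in>?I. b i *\<^sub>M w i))"
    unfolding wm[symmetric] fun_upd_idem[of B "p m" "w m", OF B[OF m]] ..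
  also have "\<dots> = 0"
  proof (rule slot_det_fun_upd_span)
    show "p m \<notin> p ` ?I"
      using pm by fastforce
  qed (use B in auto)
  finally have det_B: "slot_det B = 0" .
  have other: "slot_det (B(p j := w 0)) = - b j * ?Q" if j: "j \<in> ?I" for j
  proof -
    have single: "slot_det ((B(p j := w 0))(p m := w i)) = (if i = j then - ?Q else 0)" if i: "i \<in> ?I" for i
    proof (cases "i = j")
      case True
      have "(B(p j := w 0))(p m := w j) = (B(p m := w 0)) \<circ> Transposition.transpose (p j) (p m)"
        using pm[OF j] B j by (auto simp: fun_eq_iff Transposition.transpose_def)
      then show ?thesis
        using True slot_det_transpose[OF pm[OF j]] by simp
    next
      case False
      then have "p i \<noteq> p j"
        using p i j by (auto dest: inj_onD)
      then show ?thesis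
        using False slot_det_repeated[of "p m" "p i" "(B(p j := w 0))(p m := w i)"] pm[OF i] B i by simp
    qed
    have "B(p j := w 0) = (B(p j := w 0))(p m := w m)"
      using B[OF m] pm[OF j] by (auto simp: fun_eq_iff)
    then have "slot_det (B(p j := w 0)) = slot_det ((B(p j := w 0))(p m := \<Sum>i\<in>?I. b i *\<^sub>M w i))"
      unfolding wm[symmetric] by (rule arg_cong)
    also have "\<dots> = (\<Sum>i\<in>?I. b i * (if i = j then - ?Q else 0))"
      by (simp add: slot_det_fun_upd_lincomb single)
    also have "\<dots> = - b j * ?Q"
      using j by (simp add: if_distrib[where f="\<lambda>x. _ * x"] cong: if_cong)
    finally show ?thesis .
  qed
  have "(\<Sum>j\<in>{1..t}. slot_det (B(p j := w 0)) *\<^sub>M w j) =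
      ?Q *\<^sub>M w m + (\<Sum>j\<in>?I. slot_det (B(p j := w 0)) *\<^sub>M w j)"
    using m by (simp add: sum.remove)
  also have "\<dots> = ?Q *\<^sub>M w m - ?Q *\<^sub>M (\<Sum>j\<in>?I. b j *\<^sub>M w j)"
    by (simp add: other mat_smult_sum_right sum_negf mult.commute)
  also have "\<dots> = 0"
    unfolding wm[symmetric] by simp
  finally show ?thesis
    by (simp add: det_B)
qed

lemma slot_det_cramer:
  fixes t :: nat and B :: "'n::finite \<times> 'n \<Rightarrow> 'a::field^'n^'n"
  assumes p: "inj_on p {1..t}" and B: "\<And>i. i \<in> {1..t} \<Longrightarrow> B (p i) = w i"
    and dep: "lin_dep_mats w {0..t}"
  shows "slot_det B *\<^sub>M w 0 = (\<Sum>j\<in>{1..t}. slot_det (B(p j := w 0)) *\<^sub>M w j)"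
proof -
  obtain a where a: "\<exists>i\<in>{0..t}. a i \<noteq> 0" "(\<Sum>i\<in>{0..t}. a i *\<^sub>M w i) = 0"
    using dep unfolding lin_dep_mats_def by blast
  have "{0..t} = insert 0 {1..t}"
    by auto
  then have a0: "a 0 *\<^sub>M w 0 + (\<Sum>i\<in>{1..t}. a i *\<^sub>M w i) = 0"
    using a(2) by simp
  show ?thesis
  proof (cases "a 0 = 0")
    case False
    show ?thesis
      using mat_lincomb_solve[OF a0 False]
      by (intro slot_det_cramer_span[where b="\<lambda>i. - a i / a 0"]) (use p B in auto)
  next
    case True
    obtain m where "m \<in> {0..t}" "a m \<noteq> 0"
      using a(1) by blast
    with True have m: "m \<in> {1..t}" "a m \<noteq> 0"
      by (auto intro: Suc_leI gr0I)
    then have "a m *\<^sub>M w m + (\<Sum>i\<in>{1..t} - {m}. a i *\<^sub>M w i) = 0"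
      using a0 True by (simp add: sum.remove)
    then have "w m = (\<Sum>i\<in>{1..t} - {m}. (- a i / a m) *\<^sub>M w i)"
      using m(2) by (rule mat_lincomb_solve)
    then show ?thesis
      by (intro slot_det_cramer_dependent[where m=m and b="\<lambda>i. - a i / a m"]) (use p B m in auto)
  qed
qed

lemma det_nonzero_if_independent_rows:
  fixes R :: "'m::finite \<Rightarrow> 'a::field^'m"
  assumes "inj R" and ind: "vec.independent (range R)"
  shows "det (\<chi> s. R s) \<noteq> 0"
proof -
  have "c s = 0" if c: "(\<Sum>s\<in>UNIV. c s *s row s (\<chi> s. R s)) = 0" for c s
  proof -
    let ?u = "\<lambda>x. c (inv R x)"
    have "(\<Sum>x\<in>range R. ?u x *s x) = (\<Sum>s\<in>UNIV. c s *s R s)"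
      using \<open>inj R\<close> by (simp add: sum.reindex)
    also have "\<dots> = 0"
      using c by (simp add: row_def)
    finally have "?u (R s) = 0"
      using vec.independentD[OF ind _ subset_refl, of ?u "R s"] by simp
    then show ?thesis
      using \<open>inj R\<close> by simp
  qed
  then show ?thesis
    using matrix_right_invertible_independent_rows[of "\<chi> s. R s"]
    by (simp add: invertible_det_nz[symmetric] invertible_right_inverse)
qed

lemma surj_mat_entries: "surj (mat_entries :: 'a^'n^'m \<Rightarrow> 'a^('m \<times> 'n))"
proof (rule surjI)
  fix x :: "'a^('m \<times> 'n)"
  show "mat_entries (\<chi> i j. x $ (i, j)) = x"
    by (simp add: mat_entries_def vec_eq_iff)
qed

lemma independent_mat_entries:
  fixes A :: "nat \<Rightarrow> 'a::field^'n::finite^'n"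
  assumes "\<not> lin_dep_mats A I" "finite I"
  shows "inj_on (\<lambda>i. mat_entries (A i)) I" "vec.independent ((\<lambda>i. mat_entries (A i)) ` I)"
proof -
  let ?v = "\<lambda>i. mat_entries (A i)"
  have ind: "\<forall>i\<in>I. a i = 0" if "(\<Sum>i\<in>I. a i *s ?v i) = 0" for a
    using assms(1) that unfolding lin_dep_mats_def
    by (auto simp flip: mat_entries_lincomb mat_entries_inject[of _ 0])
  show inj: "inj_on ?v I"
  proof (rule inj_onI, rule ccontr)
    fix i j
    assume ij: "i \<in> I" "j \<in> I" "?v i = ?v j" "i \<noteq> j"
    let ?a = "\<lambda>k. if k = i then 1 else if k = j then -1 else (0::'a)"
    have "(\<Sum>k\<in>I. ?a k *s ?v k) = ?v i - ?v j"
      using ij assms(2)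
      by (simp add: if_distrib[where f="\<lambda>c. c *s _"] sum.If_cases Int_absorb1 insert_absorb cong: if_cong)
    then have "(\<Sum>k\<in>I. ?a k *s ?v k) = 0"
      using ij(3) by simp
    then have "?a i = 0"
      using ind[of ?a] ij(1) by blast
    then show False
      by simp
  qed
  show "vec.independent (?v ` I)"
  proof
    assume "vec.dependent (?v ` I)"
    then obtain u where u: "\<exists>x\<in>?v ` I. u x \<noteq> 0" "(\<Sum>x\<in>?v ` I. u x *s x) = 0"
      using vec.dependent_finite[of "?v ` I"] assms(2) by blast
    then have "(\<Sum>i\<in>I. u (?v i) *s ?v i) = 0"
      using inj by (simp add: sum.reindex)
    then show False
      using ind[of "\<lambda>i. u (?v i)"] u(1) by auto
  qed
qed

text \<open>The entry vectors of the \<open>A\<^sub>i\<close> are extended to a basis of \<open>F\<^sup>N\<close>.\<close>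

lemma independent_extends_to_nonzero_slot_det:
  fixes A :: "nat \<Rightarrow> 'a::field^'n::finite^'n" and t :: nat
  assumes indep: "\<not> lin_dep_mats A {1..t}"
  shows "t \<le> CARD('n \<times> 'n)"
    and "\<exists>Z. slot_det (\<lambda>s. if slot_index s < t then A (slot_index s + 1) else Z s) \<noteq> 0"
proof -
  let ?N = "CARD('n \<times> 'n)"
  let ?v = "\<lambda>i. mat_entries (A i)"
  define S where "S = ?v ` {1..t}"
  define L where "L = {s :: 'n \<times> 'n. slot_index s < t}"
  have inj_v: "inj_on ?v {1..t}" and "vec.independent S"
    using independent_mat_entries[OF indep] by (simp_all add: S_def)
  then obtain B where B: "S \<subseteq> B" "vec.independent B" "UNIV \<subseteq> vec.span B"
    by (meson vec.maximal_independent_subset_extend subset_UNIV)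
  have "finite B"
    using vec.finiteI_independent[OF B(2)] .
  have card_B: "card B = ?N"
    using vec.basis_card_eq_dim[of B UNIV] B by (simp add: card_cart_basis)
  have card_S: "card S = t"
    using card_image[OF inj_v] by (simp add: S_def)
  show t_le: "t \<le> ?N"
    using card_mono[OF \<open>finite B\<close> B(1)] card_S card_B by simp
  have "bij_betw (\<lambda>s. slot_index s + 1) L {1..t}"
  proof (rule bij_betw_imageI)
    show "inj_on (\<lambda>s. slot_index s + 1) L"
      by (simp add: inj_on_def)
    show "(\<lambda>s. slot_index s + 1) ` L = {1..t}"
    proof
      show "(\<lambda>s. slot_index s + 1) ` L \<subseteq> {1..t}"
        by (auto simp: L_def)
    next
      show "{1..t} \<subseteq> (\<lambda>s. slot_index s + 1) ` L"
      proof
        fix i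
        assume i: "i \<in> {1..t}"
        then have "i - 1 < ?N"
          using t_le by auto
        then have "i = slot_index (slot (i - 1) :: 'n \<times> 'n) + 1" "slot (i - 1) \<in> L"
          using i by (auto simp: L_def)
        then show "i \<in> (\<lambda>s. slot_index s + 1) ` L"
          by (rule image_eqI)
      qed
    qed
  qed
  then have bij_L: "bij_betw (\<lambda>s. ?v (slot_index s + 1)) L S"
    unfolding S_def using bij_betw_trans[OF _ inj_on_imp_bij_betw[OF inj_v]] by (simp add: o_def)
  have "card L = t"
    using bij_betw_same_card[OF bij_L] card_S by simp
  then have "card (UNIV - L) = ?N - t"
    by (simp add: card_Diff_subset)
  moreover have "card (B - S) = ?N - t"
    using card_Diff_subset[OF finite_subset[OF B(1) \<open>finite B\<close>] B(1)] card_B card_S by simp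
  ultimately obtain g where g: "bij_betw g (UNIV - L) (B - S)"
    using finite_same_card_bij[of "UNIV - L" "B - S"] \<open>finite B\<close> by auto
  define R where "R s = (if s \<in> L then ?v (slot_index s + 1) else g s)" for s
  have "bij_betw R (L \<union> (UNIV - L)) (S \<union> (B - S))"
    unfolding R_def by (rule bij_betw_disjoint_Un[OF bij_L g]) auto
  then have R: "bij_betw R UNIV B"
    using B(1) by (simp add: Un_absorb1)
  define Z where "Z s = inv mat_entries (g s)" for s
  have "mat_entries (Z s) = g s" for s
    by (simp add: Z_def surj_f_inv_f[OF surj_mat_entries])
  then have "slot_det (\<lambda>s. if slot_index s < t then A (slot_index s + 1) else Z s) = det (\<chi> s. R s)"
    by (simp add: slot_det_def R_def L_def if_distrib[where f=mat_entries] cong: if_cong)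
  also have "\<dots> \<noteq> 0"
    using R B(2) by (intro det_nonzero_if_independent_rows) (auto simp: bij_betw_def)
  finally show "\<exists>Z. slot_det (\<lambda>s. if slot_index s < t then A (slot_index s + 1) else Z s) \<noteq> 0"
    by blast
qed

subsection \<open>The central polynomials\<close>

definition nc_shifted_prod :: "'a::comm_ring_1 ncpoly \<Rightarrow> nat \<Rightarrow> 'a ncpoly list \<Rightarrow> 'a ncpoly" where
  "nc_shifted_prod W k ps = ncmul (ncmul (nc_prod (drop k ps)) W) (nc_prod (take k ps))"

lemma nc_eval_shifted_prod:
  "nc_eval (nc_shifted_prod W k ps) r = shifted_prod (nc_eval W r) k (map (\<lambda>p. nc_eval p r) ps)"
  by (simp add: nc_shifted_prod_def shifted_prod_def nc_eval_ncmul nc_eval_prod drop_map take_map)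

text \<open>Razmyslov's polynomial in the polynomials \<open>X\<^sub>s\<close> (one for each of the \<open>n\<^sup>2\<close> slots), the variable
  \<open>x\<^sub>v\<close> (playing the role of \<open>W\<close>) and the variables \<open>x\<^sub>v\<^sub>+\<^sub>1, x\<^sub>v\<^sub>+\<^sub>2, \<dots>\<close> (playing the role of \<open>Y\<close>).\<close>

definition razmyslov_poly :: "('n::finite \<times> 'n \<Rightarrow> 'a::comm_ring_1 ncpoly) \<Rightarrow> nat \<Rightarrow> 'a ncpoly" where
  "razmyslov_poly X v =
    (\<Sum>\<sigma>\<in>{\<sigma>. \<sigma> permutes UNIV}. ncmul (nc_const (of_int (sign \<sigma>)))
      (\<Sum>k<CARD('n \<times> 'n). nc_shifted_prod (nc_var v) (2 * k) (interleave (\<lambda>m. nc_var (Suc v + m)) (X \<circ> \<sigma>))))"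

definition razmyslov_factor :: "(nat \<Rightarrow> 'a::comm_ring_1^'n::finite^'n) \<Rightarrow> nat \<Rightarrow> 'a" where
  "razmyslov_factor r v =
    of_nat CARD('n) * trace (alternation (capelli_word (\<lambda>m. r (Suc v + m))) matrix_unit ** r v)"

lemma nc_eval_razmyslov_poly:
  fixes X :: "'n::finite \<times> 'n \<Rightarrow> 'a::field_char_0 ncpoly"
  shows "nc_eval (razmyslov_poly X v) r = mat (slot_det (\<lambda>s. nc_eval (X s) r) * razmyslov_factor r v)"
proof -
  have "nc_eval (razmyslov_poly X v) r =
      alternation (razmyslov_word (\<lambda>m. r (Suc v + m)) (r v)) (\<lambda>s. nc_eval (X s) r)"
    by (simp add: razmyslov_poly_def alternation_def razmyslov_word_def nc_eval_sum nc_eval_ncmul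
        nc_eval_shifted_prod map_interleave o_def matrix_mul_mat_left)
  then show ?thesis
    by (simp add: alternation_razmyslov_word razmyslov_factor_def)
qed

text \<open>The slot family for the \<open>j\<close>-th Cramer coefficient: slot number \<open>k < t\<close> holds \<open>f\<^sub>k\<^sub>+\<^sub>1\<close>,
  except that \<open>f\<^sub>j\<close> is replaced by \<open>f\<^sub>0\<close>; the remaining slots hold fresh variables \<open>x\<^sub>x\<^sub>0\<^sub>+\<^sub>k\<close>.\<close>

definition cramer_slots :: "(nat \<Rightarrow> 'a::comm_ring_1 ncpoly) \<Rightarrow> nat \<Rightarrow> nat \<Rightarrow> nat \<Rightarrow> 'n::finite \<times> 'n \<Rightarrow> 'a ncpoly"
  where "cramer_slots f t x0 j s =
    (if slot_index s < t then f (if slot_index s + 1 = j then 0 else slot_index s + 1)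
     else nc_var (x0 + slot_index s))"

definition cramer_coeff ::
  "'n::finite itself \<Rightarrow> (nat \<Rightarrow> 'a::comm_ring_1 ncpoly) \<Rightarrow> nat \<Rightarrow> nat \<Rightarrow> nat \<Rightarrow> 'a ncpoly" where
  "cramer_coeff _ f t x0 j =
    (let R = razmyslov_poly (cramer_slots f t x0 j :: 'n \<times> 'n \<Rightarrow> _) (x0 + CARD('n \<times> 'n))
     in if j = 0 then R else - R)"

lemma nc_eval_cramer_coeff:
  fixes f :: "nat \<Rightarrow> 'a::field_char_0 ncpoly" and r :: "nat \<Rightarrow> 'a^'n::finite^'n"
  shows "nc_eval (cramer_coeff TYPE('n) f t x0 j) r =
    mat ((if j = 0 then 1 else - 1) * slot_det (\<lambda>s. nc_eval (cramer_slots f t x0 j s) r) *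
      razmyslov_factor r (x0 + CARD('n \<times> 'n)))"
  by (simp add: cramer_coeff_def Let_def nc_eval_uminus nc_eval_razmyslov_poly vec_eq_iff mat_def)

lemma central_poly_cramer_coeff:
  "central_poly TYPE('n::finite) (cramer_coeff TYPE('n) (f :: nat \<Rightarrow> 'a::field_char_0 ncpoly) t x0 j)"
  unfolding central_poly_def nc_eval_cramer_coeff by blast


lemma poly_identity_cramer_combination:
  fixes f :: "nat \<Rightarrow> 'a::field_char_0 ncpoly" and t :: nat
  assumes dep: "loc_lin_dep TYPE('n::finite) f {0..t}" and t: "t \<le> CARD('n \<times> 'n)"
  shows "poly_identity TYPE('n) (\<Sum>i\<in>{0..t}. ncmul (cramer_coeff TYPE('n) f t x0 i) (f i))"
  unfolding poly_identity_def
proof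
  fix r :: "nat \<Rightarrow> 'a^'n^'n"
  define w where "w i = nc_eval (f i) r" for i
  define B where "B s = nc_eval (cramer_slots f t x0 0 s) r" for s :: "'n \<times> 'n"
  define \<kappa> where "\<kappa> = razmyslov_factor r (x0 + CARD('n \<times> 'n))"
  let ?p = "\<lambda>j. slot (j - 1) :: 'n \<times> 'n"
  have index_p: "slot_index (?p j) = j - 1" if "j \<in> {1..t}" for j
    using that t by (intro slot_index_slot) auto
  have B: "B (?p i) = w i" if "i \<in> {1..t}" for i
    using that index_p[OF that] by (auto simp: B_def w_def cramer_slots_def)
  have "inj_on ?p {1..t}"
  proof (rule inj_onI)
    fix i j
    assume ij: "i \<in> {1..t}" "j \<in> {1..t}" "?p i = ?p j"
    then have "i - 1 = j - 1"
      using index_p by metis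
    then show "i = j"
      using ij by auto
  qed
  moreover have "lin_dep_mats w {0..t}"
    using dep by (simp add: loc_lin_dep_def w_def[abs_def])
  ultimately have cramer:
    "slot_det B *\<^sub>M w 0 = (\<Sum>j\<in>{1..t}. slot_det (B(?p j := w 0)) *\<^sub>M w j)"
    using B by (intro slot_det_cramer) auto
  have slots_j: "(\<lambda>s. nc_eval (cramer_slots f t x0 j s) r) = B(?p j := w 0)" if j: "j \<in> {1..t}" for j
  proof
    fix s :: "'n \<times> 'n"
    have "slot_index s + 1 = j \<longleftrightarrow> s = ?p j"
      using index_p[OF j] j by auto
    then show "nc_eval (cramer_slots f t x0 j s) r = (B(?p j := w 0)) s"
      using j by (auto simp: cramer_slots_def B_def w_def)
  qed
  have "nc_eval (\<Sum>i\<in>{0..t}. ncmul (cramer_coeff TYPE('n) f t x0 i) (f i)) r =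
      (\<Sum>i\<in>{0..t}. ((if i = 0 then 1 else - 1) * slot_det (\<lambda>s. nc_eval (cramer_slots f t x0 i s) r) * \<kappa>) *\<^sub>M w i)"
    by (simp add: nc_eval_sum nc_eval_ncmul nc_eval_cramer_coeff matrix_mul_mat_left \<kappa>_def w_def)
  also have "\<dots> = (slot_det B * \<kappa>) *\<^sub>M w 0 + (\<Sum>j\<in>{1..t}. (- slot_det (B(?p j := w 0)) * \<kappa>) *\<^sub>M w j)"
  proof -
    have "{0..t} = insert 0 {1..t}"
      by auto
    moreover have "(\<Sum>j\<in>{1..t}. (- slot_det (\<lambda>s. nc_eval (cramer_slots f t x0 j s) r) * \<kappa>) *\<^sub>M w j) =
        (\<Sum>j\<in>{1..t}. (- slot_det (B(?p j := w 0)) * \<kappa>) *\<^sub>M w j)"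
      by (intro sum.cong refl) (simp add: slots_j)
    ultimately show ?thesis
      by (simp add: B_def[abs_def])
  qed
  also have "\<dots> = \<kappa> *\<^sub>M (slot_det B *\<^sub>M w 0 - (\<Sum>j\<in>{1..t}. slot_det (B(?p j := w 0)) *\<^sub>M w j))"
    by (simp add: mat_smult_sum_right sum_negf mult.commute vec_eq_iff algebra_simps sum_distrib_left)
  also have "\<dots> = 0"
    by (simp add: cramer)
  finally show "nc_eval (\<Sum>i\<in>{0..t}. ncmul (cramer_coeff TYPE('n) f t x0 i) (f i)) r = 0" .
qed

text \<open>At a point where \<open>f\<^sub>1, \<dots>, f\<^sub>t\<close> are independent, fill the free slots so that the slot
  determinant is nonzero, put \<open>W = 1\<close>, and choose the \<open>Y\<close>-variables so that the Capelli word
  evaluates to a diagonal matrix unit.\<close>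

lemma not_poly_identity_cramer_coeff_0:
  fixes f :: "nat \<Rightarrow> 'a::field_char_0 ncpoly" and t :: nat
  assumes indep: "\<not> loc_lin_dep TYPE('n::finite) f {1..t}"
    and fresh: "\<And>i. i \<in> {1..t} \<Longrightarrow> nc_vars (f i) \<subseteq> {..<x0}"
  shows "\<not> poly_identity TYPE('n) (cramer_coeff TYPE('n) f t x0 0)"
proof -
  let ?N = "CARD('n \<times> 'n)"
  obtain r0 :: "nat \<Rightarrow> 'a^'n^'n" where r0: "\<not> lin_dep_mats (\<lambda>i. nc_eval (f i) r0) {1..t}"
    using indep unfolding loc_lin_dep_def by blast
  obtain Z where Z: "slot_det (\<lambda>s. if slot_index s < t then nc_eval (f (slot_index s + 1)) r0 else Z s) \<noteq> 0"
    using independent_extends_to_nonzero_slot_det(2)[OF r0] by blast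
  define r where "r v =
    (if v < x0 then r0 v else if v < x0 + ?N then Z (slot (v - x0))
     else if v = x0 + ?N then mat 1 else matrix_unit (connector (v - Suc (x0 + ?N))))" for v
  have "nc_eval (f i) r = nc_eval (f i) r0" if "i \<in> {1..t}" for i
    using fresh[OF that] by (intro nc_eval_cong_vars) (auto simp: r_def)
  then have "(\<lambda>s. nc_eval (cramer_slots f t x0 0 s) r) =
      (\<lambda>s. if slot_index s < t then nc_eval (f (slot_index s + 1)) r0 else Z s)"
    using slot_index_less by (auto simp: cramer_slots_def r_def fun_eq_iff)
  moreover have "razmyslov_factor r (x0 + ?N) = of_nat CARD('n)"
  proof -
    have "(\<lambda>m. r (Suc (x0 + ?N) + m)) = matrix_unit \<circ> connector" "r (x0 + ?N) = mat 1"
      by (auto simp: r_def)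
    then show ?thesis
      by (simp add: razmyslov_factor_def alternation_capelli_word_matrix_units trace_matrix_unit)
  qed
  ultimately have "nc_eval (cramer_coeff TYPE('n) f t x0 0) r \<noteq> 0"
    using Z by (simp add: nc_eval_cramer_coeff mat_eq_zero_iff)
  then show ?thesis
    unfolding poly_identity_def by blast
qed

theorem mainTheorem13:
  fixes f :: "nat \<Rightarrow> 'a::field_char_0 ncpoly" and t :: nat
  assumes "loc_lin_dep TYPE('n::finite) f {0..t}"
    and "\<not> loc_lin_dep TYPE('n) f {1..t}"
  shows "\<exists>c :: nat \<Rightarrow> 'a ncpoly.
           (\<forall>i\<in>{0..t}. central_poly TYPE('n) (c i))
         \<and> \<not> poly_identity TYPE('n) (c 0)
         \<and> poly_identity TYPE('n) (\<Sum>i\<in>{0..t}. ncmul (c i) (f i))"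
proof -
  obtain r0 :: "nat \<Rightarrow> 'a^'n^'n" where "\<not> lin_dep_mats (\<lambda>i. nc_eval (f i) r0) {1..t}"
    using assms(2) unfolding loc_lin_dep_def by blast
  then have t: "t \<le> CARD('n \<times> 'n)"
    by (rule independent_extends_to_nonzero_slot_det(1))
  obtain x0 where "(\<Union>i\<in>{1..t}. nc_vars (f i)) \<subseteq> {..<x0}"
    using finite_nat_bounded by (meson finite_UN_I finite_atLeastAtMost finite_nc_vars)
  then have fresh: "\<And>i. i \<in> {1..t} \<Longrightarrow> nc_vars (f i) \<subseteq> {..<x0}"
    by blast
  show ?thesis
    by (intro exI[of _ "cramer_coeff TYPE('n) f t x0"] conjI ballI central_poly_cramer_coeff
        not_poly_identity_cramer_coeff_0[OF assms(2) fresh] poly_identity_cramer_combination[OF assms(1) t])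
qed

end
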